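(* Let $g$ be a prior density on $(0,\infty)$ and $\{F_\mu\}_{\mu>0}$ a family of non-negative reward distributions with $F_\mu$ having mean $\mu$, with $\lambda=\int_0^\infty E_\mu(X\mid X>0)g(\mu)\,d\mu<\infty$. Assume (A1): $g(\mu)\sim\alpha\mu^{\beta-1}$ as $\mu\to0$ for some $\alpha,\beta>0$; (A2): there is $a_1>0$ with $P_\mu(X>0)\ge a_1\min(\mu,1)$ for all $\mu>0$; and either (B1) or (B2), where $M_\mu(\theta)=E_\mu e^{\theta X}$ and: (B1) rewards are non-negative integer-valued; for every $0<\delta\le1$ there is $\theta_\delta>0$ with $M_\mu(\theta)\le e^{(1+\delta)\theta\mu}$ and $M_\mu(-\theta)\le e^{-(1-\delta)\theta\mu}$ for all $\mu>0$, $0\le\theta\le\theta_\delta$; $P_\mu(X>0)\le a_2\mu$ for some $a_2>0$; $E_\mu X^4=O(\mu)$ as $\mu\to0$; (B2) rewards are continuous with $\sup_{\mu>0}P_\mu(X\le\gamma\mu)\to0$ as $\gamma\to0$; $E_\mu X^4=O(\mu)$ as $\mu\to0$; for every $0<\delta\le1$ there is $\tau_\delta>0$ with $M_\mu(\theta)\le e^{(1+\delta)\theta\mu}$ and $M_\mu(-\theta)\le e^{-(1-\delta)\theta\mu}$ whenever $0<\theta\mu\le\tau_\delta$; and for each $t\ge1$ there is $\xi_t>0$ with $\sup_{\mu\le\xi_t}P_\mu(\hat\sigma_t^2\le\gamma\mu^2)\to0$ as $\gamma\to0$. Let $X_1,X_2,\ldots$ be i.i.d. $F_\mu$, $S_t=\sum_{u=1}^tX_u$.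 Let $b_n\to\infty$ with $b_n=o(n^\delta)$ for all $\delta>0$, $\zeta_n\sim Cn^{-\frac1{\beta+1}}$ with $C=\big(\frac{\lambda\beta(\beta+1)}{\alpha}\big)^{\frac1{\beta+1}}$, $d_n=n^{-\omega}$ for some $0<\omega<\frac1{\beta+1}$, and $T_b=\inf\{t:S_t>b_nt\zeta_n\}$. Then as $n\to\infty$, $$\sup_{\mu\ge d_n}\big[\min(\mu,1)E_\mu T_b\big]=O(1),\qquad E_g\big(T_b\,\mu\,\mathbf 1_{\{\mu\ge d_n\}}\big)\le\lambda+o(1),$$ where in the second expression $\mu\sim g$ and, given $\mu$, $T_b$ is computed from rewards i.i.d. $F_\mu$.
   Context: $\hat\sigma_t^2=t^{-1}\sum_{u=1}^t(X_u-\bar X_t)^2$, $\bar X_t=S_t/t$, for $X_u$ i.i.d. $F_\mu$. $E_\mu,P_\mu$ denote expectation/probability under $F_\mu$. *)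

theory Defs
  imports "HOL-Probability.Probability" "HOL-Library.Landau_Symbols"
begin

definition mgf :: "real measure \<Rightarrow> real \<Rightarrow> ennreal" where
  "mgf M \<theta> = (\<integral>\<^sup>+ x. ennreal (exp (\<theta> * x)) \<partial>M)"

definition cond_mean_pos :: "real measure \<Rightarrow> real" where
  "cond_mean_pos M = (\<integral> x. x * indicator {0<..} x \<partial>M) / measure M {0<..}"

definition iid_seq :: "real measure \<Rightarrow> (nat \<Rightarrow> real) measure" where
  "iid_seq M = (\<Pi>\<^sub>M i\<in>(UNIV::nat set). M)"

text \<open>S_t = X_1 + ... + X_t (the sequence is indexed from 0).\<close>
definition psum :: "(nat \<Rightarrow> real) \<Rightarrow> nat \<Rightarrow> real" where
  "psum x t = (\<Sum>u<t. x u)"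

definition sample_var :: "(nat \<Rightarrow> real) \<Rightarrow> nat \<Rightarrow> real" where
  "sample_var x t = (\<Sum>u<t. (x u - psum x t / real t)^2) / real t"

text \<open>T = inf {t \<ge> 1 : S_t > c t}, with inf {} = \<infinity>.\<close>
definition stop_time :: "real \<Rightarrow> (nat \<Rightarrow> real) \<Rightarrow> ennreal" where
  "stop_time c x = (INF t\<in>{t::nat. 1 \<le> t \<and> psum x t > c * real t}. ennreal (real t))"

definition fourth_moment_O :: "(real \<Rightarrow> real measure) \<Rightarrow> bool" where
  "fourth_moment_O F \<longleftrightarrow>
     (\<exists>K. \<forall>\<^sub>F \<mu> in at_right 0. (\<integral>\<^sup>+ x. ennreal (x ^ 4) \<partial>F \<mu>) \<le> ennreal (K * \<mu>))"

definition cond_B1 :: "(real \<Rightarrow> real measure) \<Rightarrow> bool" where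
  "cond_B1 F \<longleftrightarrow>
     (\<forall>\<mu>>0. AE x in F \<mu>. x \<in> \<nat>) \<and>
     (\<forall>\<delta>. 0 < \<delta> \<and> \<delta> \<le> 1 \<longrightarrow> (\<exists>\<theta>\<delta>>0. \<forall>\<mu>>0. \<forall>\<theta>. 0 \<le> \<theta> \<and> \<theta> \<le> \<theta>\<delta> \<longrightarrow>
        mgf (F \<mu>) \<theta> \<le> ennreal (exp ((1 + \<delta>) * \<theta> * \<mu>)) \<and>
        mgf (F \<mu>) (- \<theta>) \<le> ennreal (exp (- (1 - \<delta>) * \<theta> * \<mu>)))) \<and>
     (\<exists>a2>0. \<forall>\<mu>>0. measure (F \<mu>) {0<..} \<le> a2 * \<mu>) \<and>
     fourth_moment_O F"

definition cond_B2 :: "(real \<Rightarrow> real measure) \<Rightarrow> bool" where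
  "cond_B2 F \<longleftrightarrow>
     (\<forall>\<mu>>0. \<forall>x. measure (F \<mu>) {x} = 0) \<and>
     ((\<lambda>\<gamma>. SUP \<mu>\<in>{0<..}. measure (F \<mu>) {..\<gamma> * \<mu>}) \<longlongrightarrow> 0) (at_right 0) \<and>
     fourth_moment_O F \<and>
     (\<forall>\<delta>. 0 < \<delta> \<and> \<delta> \<le> 1 \<longrightarrow> (\<exists>\<tau>>0. \<forall>\<mu>>0. \<forall>\<theta>. 0 < \<theta> * \<mu> \<and> \<theta> * \<mu> \<le> \<tau> \<longrightarrow>
        mgf (F \<mu>) \<theta> \<le> ennreal (exp ((1 + \<delta>) * \<theta> * \<mu>)) \<and>
        mgf (F \<mu>) (- \<theta>) \<le> ennreal (exp (- (1 - \<delta>) * \<theta> * \<mu>)))) \<and>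
     (\<forall>t::nat. 2 \<le> t \<longrightarrow> (\<exists>\<xi>>0.
        ((\<lambda>\<gamma>. SUP \<mu>\<in>{0<..\<xi>}. measure (iid_seq (F \<mu>))
              {x \<in> space (iid_seq (F \<mu>)). sample_var x t \<le> \<gamma> * \<mu>^2}) \<longlongrightarrow> 0) (at_right 0)))"

end

theory Submission
  imports Defs
begin

(*
  Put c = b_n \<zeta>_n.  Since b_n grows slower than every power of n and \<zeta>_n is of order
  n^(-1/(\<beta>+1)), c = o(d_n); hence for every fixed \<eta> > 0 eventually c \<le> \<eta> \<mu> for all \<mu> \<ge> d_n.

  The mean stopping time is at most 1 + sum_{t \<ge> 1} P(S_t \<le> c t).  The lower mgf bound of
  (B1)/(B2) with \<delta> = 1/2 and Chernoff's inequality give P(S_t \<le> c t) \<le> exp(-\<theta> \<mu> t / 4)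
  once c \<le> \<mu>/4, where \<theta> is a constant under (B1) and \<theta> = \<tau>/\<mu> under (B2).  Summing the
  geometric series bounds min(\<mu>,1) E T uniformly.

  For the Bayes risk, \<mu> E T is compared with E(X | X > 0) = \<mu> / P(X > 0).  Under (B1) the
  times t < 1/c contribute at most sum_t P(X = 0)^t = 1/P(X > 0) - 1, since integer rewards keep
  S_t below c t < 1 only if all of them vanish; the remaining Chernoff terms are
  O(exp(-\<theta>/(8\<eta>))).  Under (B2) the first N times contribute at most N sup_\<mu> P(X \<le> N \<eta> \<mu>),
  which is small for small \<eta>, and the rest is a geometric tail.  Either way
  \<mu> E T \<le> E(X | X > 0) + \<epsilon> (\<mu> + 1), and integrating against g gives \<lambda> + \<epsilon> (\<lambda> + 1).

  P(X > 0) > 0 already follows from the mean.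
*)

definition mean_stop_time :: "real \<Rightarrow> real measure \<Rightarrow> ennreal" where
  "mean_stop_time c M = (\<integral>\<^sup>+ x. stop_time c x \<partial>iid_seq M)"

lemma stop_time_le_suminf:
  "stop_time c x \<le> 1 + (\<Sum>t. indicator {x. psum x (Suc t) \<le> c * real (Suc t)} x)"
    (is "_ \<le> 1 + ?N")
proof -
  have count: "ennreal (real m) \<le> ?N" if "\<And>t. t < m \<Longrightarrow> psum x (Suc t) \<le> c * real (Suc t)" for m
  proof -
    have "ennreal (real m) = (\<Sum>t<m. indicator {x. psum x (Suc t) \<le> c * real (Suc t)} x)"
      using that by (simp add: indicator_def ennreal_of_nat_eq_real_of_nat)
    also have "\<dots> \<le> ?N"
      by (rule sum_le_suminf[OF summableI]) auto
    finally show ?thesis .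
  qed
  show ?thesis
  proof (cases "\<exists>k. 1 \<le> k \<and> psum x k > c * real k")
    case True
    define k where "k = (LEAST k. 1 \<le> k \<and> psum x k > c * real k)"
    have k: "1 \<le> k" "psum x k > c * real k"
      unfolding k_def using LeastI_ex[OF True] by auto
    have below: "psum x (Suc t) \<le> c * real (Suc t)" if "t < k - 1" for t
    proof -
      have "Suc t < k" using that by simp
      from not_less_Least[OF this[unfolded k_def]] show ?thesis by auto
    qed
    have "stop_time c x \<le> ennreal (real k)"
      unfolding stop_time_def using k by (intro INF_lower) auto
    also have "\<dots> = 1 + ennreal (real (k - 1))"
      using k ennreal_plus[of 1 "real (k - 1)"] by simp
    also have "\<dots> \<le> 1 + ?N"
      by (intro add_left_mono count below)
    finally show ?thesis .
  next
    case False
    then have "ennreal (real m) \<le> ?N" for m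
      by (intro count) (simp add: not_less del: of_nat_Suc)
    then have "(SUP m. of_nat m :: ennreal) \<le> ?N"
      by (intro SUP_least) (simp add: ennreal_of_nat_eq_real_of_nat)
    then show ?thesis by (simp add: ennreal_SUP_of_nat_eq_top top_unique)
  qed
qed

lemma inverse_one_minus_exp_neg_le:
  fixes x :: real
  assumes "0 < x"
  shows "1 / (1 - exp (- x)) \<le> 1 + 1 / x"
proof -
  have "(1 + x) * exp (- x) \<le> 1"
    using exp_ge_add_one_self[of x] by (simp add: exp_minus field_simps)
  then show ?thesis
    using assms by (simp add: field_simps)
qed

context real_distribution
begin

lemma product_prob_space_iid: "product_prob_space (\<lambda>_. M)"
  by (rule product_prob_spaceI) (rule prob_space_axioms)

lemma prob_space_iid_seq: "prob_space (iid_seq M)"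
  unfolding iid_seq_def by (intro prob_space_PiM prob_space_axioms)

lemma space_iid_seq [simp]: "space (iid_seq M) = UNIV"
  unfolding iid_seq_def by (simp add: space_PiM sets_eq_imp_space_eq[where M'=borel])

lemma iid_seq_component_measurable [measurable]: "(\<lambda>x. x u) \<in> borel_measurable (iid_seq M)"
  unfolding iid_seq_def by measurable

lemma psum_measurable [measurable]: "(\<lambda>x. psum x t) \<in> borel_measurable (iid_seq M)"
  unfolding psum_def by measurable

lemma psum_le_sets [measurable]: "{x. psum x t \<le> a} \<in> sets (iid_seq M)"
proof -
  have "{x \<in> space (iid_seq M). psum x t \<le> a} \<in> sets (iid_seq M)"
    by measurable
  then show ?thesis by simp
qed

lemma nn_integral_iid_seq_prod:
  assumes f [measurable]: "f \<in> borel_measurable M"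
  shows "(\<integral>\<^sup>+ x. (\<Prod>u<t. f (x u)) \<partial>iid_seq M) = (\<integral>\<^sup>+ y. f y \<partial>M) ^ t"
proof -
  interpret P: product_prob_space "\<lambda>_. M" UNIV by (rule product_prob_space_iid)
  have restrict: "distr (iid_seq M) (\<Pi>\<^sub>M u\<in>{..<t}. M) (\<lambda>x. restrict x {..<t}) = (\<Pi>\<^sub>M u\<in>{..<t}. M)"
    unfolding iid_seq_def by (rule P.distr_PiM_restrict_finite) auto
  have "(\<integral>\<^sup>+ x. (\<Prod>u<t. f (x u)) \<partial>iid_seq M) = (\<integral>\<^sup>+ x. (\<Prod>u<t. f (restrict x {..<t} u)) \<partial>iid_seq M)"
    by (intro nn_integral_cong prod.cong) auto
  also have "\<dots> = (\<integral>\<^sup>+ x. (\<Prod>u<t. f (x u)) \<partial>distr (iid_seq M) (\<Pi>\<^sub>M u\<in>{..<t}. M) (\<lambda>x. restrict x {..<t}))"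
    by (subst nn_integral_distr) (simp_all add: iid_seq_def measurable_restrict_subset, measurable)
  also have "\<dots> = (\<Prod>u<t. (\<integral>\<^sup>+ y. f y \<partial>M))"
    unfolding restrict by (rule P.product_nn_integral_prod) auto
  finally show ?thesis by simp
qed

lemma AE_iid_seq:
  assumes "AE y in M. P y"
  shows "AE x in iid_seq M. \<forall>u. P (x u)"
proof -
  interpret P: product_prob_space "\<lambda>_. M" UNIV by (rule product_prob_space_iid)
  show ?thesis
    unfolding iid_seq_def by (subst AE_all_countable) (auto intro!: P.AE_component assms)
qed

lemma emeasure_psum_le_chernoff:
  assumes "0 \<le> \<theta>"
  shows "emeasure (iid_seq M) {x. psum x t \<le> a} \<le> ennreal (exp (\<theta> * a)) * mgf M (- \<theta>) ^ t"
proof -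
  have "emeasure (iid_seq M) {x. psum x t \<le> a} = (\<integral>\<^sup>+ x. indicator {x. psum x t \<le> a} x \<partial>iid_seq M)"
    by simp
  also have "\<dots> \<le> (\<integral>\<^sup>+ x. ennreal (exp (\<theta> * a)) * (\<Prod>u<t. ennreal (exp (- \<theta> * x u))) \<partial>iid_seq M)"
  proof (rule nn_integral_mono)
    fix x
    have "ennreal (exp (\<theta> * a)) * (\<Prod>u<t. ennreal (exp (- \<theta> * x u))) = ennreal (exp (\<theta> * (a - psum x t)))"
      by (simp add: prod_ennreal ennreal_mult[symmetric] exp_sum[symmetric] exp_add[symmetric]
          psum_def sum_distrib_left sum_negf algebra_simps)
    then show "indicator {x. psum x t \<le> a} x \<le> ennreal (exp (\<theta> * a)) * (\<Prod>u<t. ennreal (exp (- \<theta> * x u)))"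
      using assms by (auto simp: indicator_def)
  qed
  also have "\<dots> = ennreal (exp (\<theta> * a)) * mgf M (- \<theta>) ^ t"
    using nn_integral_iid_seq_prod[of "\<lambda>y. ennreal (exp (- \<theta> * y))" t]
    by (subst nn_integral_cmult) (measurable, simp add: mgf_def)
  finally show ?thesis .
qed

lemma emeasure_psum_le_power:
  assumes nonneg: "AE y in M. 0 \<le> y"
  shows "emeasure (iid_seq M) {x. psum x t \<le> a} \<le> emeasure M {..a} ^ t"
proof -
  have "emeasure (iid_seq M) {x. psum x t \<le> a} = (\<integral>\<^sup>+ x. indicator {x. psum x t \<le> a} x \<partial>iid_seq M)"
    by simp
  also have "\<dots> \<le> (\<integral>\<^sup>+ x. (\<Prod>u<t. indicator {..a} (x u)) \<partial>iid_seq M)"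
  proof (rule nn_integral_mono_AE)
    show "AE x in iid_seq M. indicator {x. psum x t \<le> a} x \<le> (\<Prod>u<t. indicator {..a} (x u) :: ennreal)"
      using AE_iid_seq[OF nonneg]
    proof eventually_elim
      case (elim x)
      have "x u \<le> a" if "u < t" "psum x t \<le> a" for u
      proof -
        have "x u \<le> psum x t"
          unfolding psum_def using that elim by (intro member_le_sum) auto
        then show ?thesis using that by linarith
      qed
      then show ?case by (auto simp: indicator_def)
    qed
  qed
  also have "\<dots> = emeasure M {..a} ^ t"
    by (simp add: nn_integral_iid_seq_prod)
  finally show ?thesis .
qed

text \<open>P(T > t) \<le> P(S_t \<le> c t) for t \<ge> 1, while P(T > 0) = 1 accounts for the head q 0.\<close>

lemma mean_stop_time_le_suminf:
  assumes tail: "\<And>t. emeasure (iid_seq M) {x. psum x (Suc t) \<le> c * real (Suc t)} \<le> ennreal (q (Suc t))"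
    and "1 \<le> q 0" and "\<And>t. 0 \<le> q t" and "summable q"
  shows "mean_stop_time c M \<le> ennreal (suminf q)"
proof -
  interpret P: prob_space "iid_seq M" by (rule prob_space_iid_seq)
  have "mean_stop_time c M
     \<le> (\<integral>\<^sup>+ x. 1 + (\<Sum>t. indicator {x. psum x (Suc t) \<le> c * real (Suc t)} x) \<partial>iid_seq M)"
    unfolding mean_stop_time_def by (intro nn_integral_mono stop_time_le_suminf)
  also have "\<dots> = 1 + (\<Sum>t. emeasure (iid_seq M) {x. psum x (Suc t) \<le> c * real (Suc t)})"
    by (simp add: nn_integral_add nn_integral_suminf P.emeasure_space_1[simplified] del: of_nat_Suc)
  also have "\<dots> \<le> 1 + (\<Sum>t. ennreal (q (Suc t)))"
    by (intro add_left_mono suminf_le tail) auto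
  also have "\<dots> = ennreal (1 + (\<Sum>t. q (Suc t)))"
    using assms(3,4) by (simp add: suminf_ennreal2 ennreal_plus suminf_nonneg summable_Suc_iff)
  also have "\<dots> \<le> ennreal (suminf q)"
    using assms(2,4) by (intro ennreal_leI) (simp add: suminf_split_head)
  finally show ?thesis .
qed

lemma emeasure_psum_le_exp_decay:
  assumes "0 \<le> \<theta>" and mgf: "mgf M (- \<theta>) \<le> ennreal (exp (- (\<theta> * \<mu> / 2)))" and "c \<le> \<mu> / 4"
  shows "emeasure (iid_seq M) {x. psum x t \<le> c * real t} \<le> ennreal (exp (- (\<theta> * \<mu> / 4)) ^ t)"
proof -
  have "emeasure (iid_seq M) {x. psum x t \<le> c * real t}
      \<le> ennreal (exp (\<theta> * (c * real t))) * mgf M (- \<theta>) ^ t"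
    by (rule emeasure_psum_le_chernoff[OF assms(1)])
  also have "\<dots> \<le> ennreal (exp (\<theta> * (c * real t))) * ennreal (exp (- (\<theta> * \<mu> / 2))) ^ t"
    by (intro mult_left_mono power_mono mgf) auto
  also have "\<dots> = ennreal (exp (\<theta> * real t * (c - \<mu> / 2)))"
    by (simp add: ennreal_power ennreal_mult[symmetric] exp_of_nat_mult[symmetric]
        exp_add[symmetric] algebra_simps)
  also have "\<dots> \<le> ennreal (exp (\<theta> * real t * (- \<mu> / 4)))"
    using assms by (intro ennreal_leI exp_mono mult_left_mono) auto
  also have "\<dots> = ennreal (exp (- (\<theta> * \<mu> / 4)) ^ t)"
    by (simp add: exp_of_nat_mult[symmetric] algebra_simps)
  finally show ?thesis .
qed

lemma mean_stop_time_chernoff: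
  assumes "0 \<le> \<theta>" "0 < \<theta> * \<mu>" and mgf: "mgf M (- \<theta>) \<le> ennreal (exp (- (\<theta> * \<mu> / 2)))"
    and "c \<le> \<mu> / 4"
  shows "mean_stop_time c M \<le> ennreal (1 + 4 / (\<theta> * \<mu>))"
proof -
  define r where "r = exp (- (\<theta> * \<mu> / 4))"
  have r: "0 < r" "r < 1"
    using assms unfolding r_def by auto
  have "mean_stop_time c M \<le> ennreal (\<Sum>t. r ^ t)"
  proof (rule mean_stop_time_le_suminf)
    show "emeasure (iid_seq M) {x. psum x (Suc t) \<le> c * real (Suc t)} \<le> ennreal (r ^ Suc t)" for t
      unfolding r_def by (rule emeasure_psum_le_exp_decay[OF assms(1) mgf assms(4)])
  qed (use r in auto)
  also have "\<dots> \<le> ennreal (1 + 4 / (\<theta> * \<mu>))"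
    using r inverse_one_minus_exp_neg_le[of "\<theta> * \<mu> / 4"] assms(2)
    by (intro ennreal_leI) (simp add: suminf_geometric r_def)
  finally show ?thesis .
qed

lemma emeasure_psum_le_nat_valued:
  assumes nat: "AE y in M. y \<in> \<nat>" and "a < 1"
  shows "emeasure (iid_seq M) {x. psum x t \<le> a} \<le> ennreal ((1 - measure M {0<..}) ^ t)"
proof -
  have "AE y in M. 0 \<le> y"
    using nat by eventually_elim (auto elim: Nats_cases)
  then have "emeasure (iid_seq M) {x. psum x t \<le> a} \<le> emeasure M {..a} ^ t"
    by (rule emeasure_psum_le_power)
  also have "\<dots> \<le> emeasure M (space M - {0<..}) ^ t"
  proof (intro power_mono emeasure_mono_AE)
    show "AE x in M. x \<in> {..a} \<longrightarrow> x \<in> space M - {0<..}"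
      using nat by eventually_elim (use \<open>a < 1\<close> in \<open>auto elim!: Nats_cases\<close>)
  qed auto
  also have "\<dots> = ennreal ((1 - measure M {0<..}) ^ t)"
    using prob_compl[of "{0<..}"] by (simp add: emeasure_eq_measure ennreal_power)
  finally show ?thesis .
qed

lemma mean_stop_time_lattice:
  assumes nat: "AE y in M. y \<in> \<nat>" and p: "0 < measure M {0<..}"
    and "0 < \<theta>" "0 < \<mu>" and mgf: "mgf M (- \<theta>) \<le> ennreal (exp (- (\<theta> * \<mu> / 2)))"
    and \<eta>: "0 < \<eta>" "\<eta> \<le> 1 / 4" and c: "c \<le> \<eta> * \<mu>"
  shows "mean_stop_time c M
    \<le> ennreal (1 / measure M {0<..} + exp (- (\<theta> / (8 * \<eta>))) * (1 + 8 / (\<theta> * \<mu>)))"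
proof -
  define p where "p = measure M {0<..}"
  define K where "K = exp (- (\<theta> / (8 * \<eta>)))"
  define \<rho> where "\<rho> = exp (- (\<theta> * \<mu> / 8))"
  have p01: "0 < p" "p \<le> 1"
    using p unfolding p_def by auto
  have \<rho>: "0 < \<rho>" "\<rho> < 1"
    using assms unfolding \<rho>_def by auto
  have "\<eta> * \<mu> \<le> \<mu> / 4"
    using \<eta> \<open>0 < \<mu>\<close> by (simp add: mult_right_mono)
  with c have c4: "c \<le> \<mu> / 4" by linarith
  have tail: "emeasure (iid_seq M) {x. psum x s \<le> c * real s} \<le> ennreal ((1 - p) ^ s + K * \<rho> ^ s)" for s
  proof (cases "c * real s < 1")
    case True
    then have "emeasure (iid_seq M) {x. psum x s \<le> c * real s} \<le> ennreal ((1 - p) ^ s)"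
      unfolding p_def by (rule emeasure_psum_le_nat_valued[OF nat])
    also have "\<dots> \<le> ennreal ((1 - p) ^ s + K * \<rho> ^ s)"
      using \<rho> by (intro ennreal_leI) (simp add: K_def)
    finally show ?thesis .
  next
    case False
    \<comment> \<open>Beyond time 1/c the Chernoff exponent dominates 1/\<eta>, which pays for the factor K.\<close>
    have "1 \<le> \<eta> * (\<mu> * real s)"
      using False c by (smt (verit) mult.assoc mult_right_mono of_nat_0_le_iff)
    then have "\<theta> / (8 * \<eta>) \<le> \<theta> * \<mu> * real s / 8"
      using \<eta> \<open>0 < \<theta>\<close> by (simp add: field_simps)
    then have decay: "exp (- (\<theta> * \<mu> / 4)) ^ s \<le> K * \<rho> ^ s"
      by (simp add: K_def \<rho>_def exp_of_nat_mult[symmetric] exp_add[symmetric] algebra_simps)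
    have "emeasure (iid_seq M) {x. psum x s \<le> c * real s} \<le> ennreal (exp (- (\<theta> * \<mu> / 4)) ^ s)"
      using \<open>0 < \<theta>\<close> by (intro emeasure_psum_le_exp_decay[OF _ mgf c4]) simp
    also have "\<dots> \<le> ennreal ((1 - p) ^ s + K * \<rho> ^ s)"
      using decay p01 by (intro ennreal_leI) (simp add: add_increasing)
    finally show ?thesis .
  qed
  have sums: "(\<lambda>s. (1 - p) ^ s + K * \<rho> ^ s) sums (1 / p + K * (1 / (1 - \<rho>)))"
    using geometric_sums[of "1 - p"] geometric_sums[of \<rho>] p01 \<rho>
    by (intro sums_add sums_mult) auto
  have "mean_stop_time c M \<le> ennreal (\<Sum>s. (1 - p) ^ s + K * \<rho> ^ s)"
    by (rule mean_stop_time_le_suminf[where q="\<lambda>s. (1 - p) ^ s + K * \<rho> ^ s"])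
      (rule tail, use sums p01 \<rho> in \<open>auto simp: sums_iff K_def\<close>)
  also have "\<dots> = ennreal (1 / p + K * (1 / (1 - \<rho>)))"
    using sums by (simp add: sums_iff)
  also have "\<dots> \<le> ennreal (1 / p + K * (1 + 8 / (\<theta> * \<mu>)))"
    using inverse_one_minus_exp_neg_le[of "\<theta> * \<mu> / 8"] assms(3,4)
    by (intro ennreal_leI add_left_mono mult_left_mono) (auto simp: \<rho>_def K_def)
  finally show ?thesis
    unfolding p_def K_def .
qed

lemma mean_stop_time_small_ball:
  assumes nonneg: "AE y in M. 0 \<le> y"
    and "0 \<le> \<theta>" "0 < \<theta> * \<mu>" and mgf: "mgf M (- \<theta>) \<le> ennreal (exp (- (\<theta> * \<mu> / 2)))"
    and c: "c \<le> \<mu> / 4"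
    and small: "\<And>t. 1 \<le> t \<Longrightarrow> t \<le> N \<Longrightarrow> measure M {..c * real t} \<le> e" and "0 \<le> e"
  shows "mean_stop_time c M
    \<le> ennreal (1 + real N * e + exp (- (\<theta> * \<mu> / 8)) ^ (N + 1) / (1 - exp (- (\<theta> * \<mu> / 8))))"
proof -
  define r where "r = exp (- (\<theta> * \<mu> / 8))"
  have r: "0 < r" "r < 1"
    using assms unfolding r_def by auto
  define q where "q s = (if s = 0 then 1 else 0) + (if s \<in> {1..N} then e else 0) + r ^ (N + 1) * r ^ s" for s
  have sums: "q sums (1 + (\<Sum>s\<in>{1..N}. e) + r ^ (N + 1) * (1 / (1 - r)))"
    unfolding q_def using r
    by (intro sums_add sums_single[where f="\<lambda>_. 1"] sums_If_finite_set sums_mult geometric_sums) auto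
  have tail: "emeasure (iid_seq M) {x. psum x s \<le> c * real s} \<le> ennreal (q s)" if "1 \<le> s" for s
  proof (cases "s \<le> N")
    case True
    have "emeasure (iid_seq M) {x. psum x s \<le> c * real s} \<le> emeasure M {..c * real s} ^ s"
      by (rule emeasure_psum_le_power[OF nonneg])
    also have "\<dots> \<le> emeasure M {..c * real s} ^ 1"
      using that by (intro power_decreasing) (auto simp: emeasure_le_1)
    also have "\<dots> \<le> ennreal e"
      using small[OF that True] by (simp add: emeasure_eq_measure ennreal_leI)
    also have "\<dots> \<le> ennreal (q s)"
      using that True r by (intro ennreal_leI) (simp add: q_def)
    finally show ?thesis .
  next
    case False
    \<comment> \<open>Half of the Chernoff exponent pays for the first N + 1 terms.\<close>
    have "exp (- (\<theta> * \<mu> / 4)) ^ s = r ^ s * r ^ s"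
      by (simp add: r_def power_mult_distrib[symmetric] exp_add[symmetric] mult.commute)
    also have "\<dots> \<le> r ^ (N + 1) * r ^ s"
      using False r by (intro mult_right_mono power_decreasing) auto
    also have "\<dots> \<le> q s"
      using that False \<open>0 \<le> e\<close> by (simp add: q_def)
    finally have decay: "exp (- (\<theta> * \<mu> / 4)) ^ s \<le> q s" .
    have "emeasure (iid_seq M) {x. psum x s \<le> c * real s} \<le> ennreal (exp (- (\<theta> * \<mu> / 4)) ^ s)"
      by (rule emeasure_psum_le_exp_decay[OF \<open>0 \<le> \<theta>\<close> mgf c])
    also have "\<dots> \<le> ennreal (q s)"
      using decay by (rule ennreal_leI)
    finally show ?thesis .
  qed
  have "mean_stop_time c M \<le> ennreal (suminf q)"
    by (rule mean_stop_time_le_suminf) (rule tail, use sums r \<open>0 \<le> e\<close> in \<open>auto simp: sums_iff q_def\<close>)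
  also have "suminf q = 1 + real N * e + r ^ (N + 1) / (1 - r)"
    using sums by (simp add: sums_iff)
  finally show ?thesis
    unfolding r_def .
qed

end

lemma cond_B1_mgf:
  assumes "cond_B1 F"
  shows "\<exists>\<theta>>0. \<forall>\<mu>>0. mgf (F \<mu>) (- \<theta>) \<le> ennreal (exp (- (\<theta> * \<mu> / 2)))"
proof -
  have "\<exists>\<theta>>0. \<forall>\<mu>>0. mgf (F \<mu>) (- \<theta>) \<le> ennreal (exp (- (1 - 1 / 2) * \<theta> * \<mu>))"
    using assms unfolding cond_B1_def
    by (elim conjE allE[of _ "1 / 2"]) (auto intro: order.refl)
  then show ?thesis by simp
qed

lemma cond_B2_mgf:
  assumes "cond_B2 F"
  shows "\<exists>\<tau>>0. \<forall>\<mu>>0. mgf (F \<mu>) (- (\<tau> / \<mu>)) \<le> ennreal (exp (- (\<tau> / 2)))"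
proof -
  obtain \<tau> where "\<tau> > 0" and \<tau>: "\<forall>\<mu>>0. \<forall>\<theta>. 0 < \<theta> * \<mu> \<and> \<theta> * \<mu> \<le> \<tau> \<longrightarrow>
      mgf (F \<mu>) (- \<theta>) \<le> ennreal (exp (- (1 - 1 / 2) * \<theta> * \<mu>))"
    using assms unfolding cond_B2_def by (elim conjE allE[of _ "1 / 2"]) auto
  have "mgf (F \<mu>) (- (\<tau> / \<mu>)) \<le> ennreal (exp (- (\<tau> / 2)))" if "0 < \<mu>" for \<mu>
    using \<tau>[rule_format, OF that, of "\<tau> / \<mu>"] that \<open>\<tau> > 0\<close> by simp
  with \<open>\<tau> > 0\<close> show ?thesis by blast
qed

lemma cond_B_mgf_uniform:
  assumes "cond_B1 F \<or> cond_B2 F"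
  shows "\<exists>\<kappa>>0. \<forall>\<mu>>0. \<exists>\<theta>\<ge>0.
    \<kappa> * min \<mu> 1 \<le> \<theta> * \<mu> \<and> mgf (F \<mu>) (- \<theta>) \<le> ennreal (exp (- (\<theta> * \<mu> / 2)))"
  using assms
proof
  assume "cond_B1 F"
  then obtain \<theta> where "\<theta> > 0" "\<forall>\<mu>>0. mgf (F \<mu>) (- \<theta>) \<le> ennreal (exp (- (\<theta> * \<mu> / 2)))"
    using cond_B1_mgf by blast
  then show ?thesis
    by (intro exI[of _ \<theta>]) (auto intro!: exI[of _ \<theta>] mult_left_mono)
next
  assume "cond_B2 F"
  then obtain \<tau> where "\<tau> > 0" and \<tau>: "\<forall>\<mu>>0. mgf (F \<mu>) (- (\<tau> / \<mu>)) \<le> ennreal (exp (- (\<tau> / 2)))"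
    using cond_B2_mgf by blast
  have "\<exists>\<theta>\<ge>0. \<tau> * min \<mu> 1 \<le> \<theta> * \<mu> \<and> mgf (F \<mu>) (- \<theta>) \<le> ennreal (exp (- (\<theta> * \<mu> / 2)))"
    if "0 < \<mu>" for \<mu>
    using that \<open>\<tau> > 0\<close> \<tau> by (intro exI[of _ "\<tau> / \<mu>"]) (simp add: mult_left_le)
  with \<open>\<tau> > 0\<close> show ?thesis by blast
qed

locale reward_family =
  fixes F :: "real \<Rightarrow> real measure"
  assumes real_distribution: "0 < \<mu> \<Longrightarrow> real_distribution (F \<mu>)"
    and nonneg: "0 < \<mu> \<Longrightarrow> AE x in F \<mu>. 0 \<le> x"
    and mean: "0 < \<mu> \<Longrightarrow> (\<integral>x. x \<partial>F \<mu>) = \<mu>"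
begin

lemma prob_reward_pos_gt_0:
  assumes "0 < \<mu>"
  shows "0 < measure (F \<mu>) {0<..}"
proof (rule ccontr)
  interpret real_distribution "F \<mu>" by (rule real_distribution[OF assms])
  assume "\<not> 0 < prob {0<..}"
  then have "AE x in F \<mu>. x \<notin> {0<..}"
    using prob_eq_0[of "{0<..}"] measure_nonneg[of "F \<mu>" "{0<..}"] by simp
  with nonneg[OF assms] have "AE x in F \<mu>. x = 0"
    by eventually_elim auto
  then have "(\<integral>x. x \<partial>F \<mu>) = 0"
    by (simp add: integral_cong_AE[where g="\<lambda>_. 0"])
  with mean[OF assms] assms show False by simp
qed

lemma cond_mean_pos_eq:
  assumes "0 < \<mu>"
  shows "cond_mean_pos (F \<mu>) = \<mu> / measure (F \<mu>) {0<..}"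
proof -
  interpret real_distribution "F \<mu>" by (rule real_distribution[OF assms])
  have "(\<integral>x. x * indicator {0<..} x \<partial>F \<mu>) = (\<integral>x. x \<partial>F \<mu>)"
    using nonneg[OF assms] by (intro integral_cong_AE) (auto simp: indicator_def elim!: eventually_mono)
  then show ?thesis
    unfolding cond_mean_pos_def using mean[OF assms] by simp
qed

lemma le_cond_mean_pos:
  assumes "0 < \<mu>"
  shows "\<mu> \<le> cond_mean_pos (F \<mu>)"
proof -
  have "measure (F \<mu>) {0<..} \<le> 1"
    using real_distribution[OF assms] by (simp add: real_distribution_def prob_space.prob_le_1)
  then show ?thesis
    using assms prob_reward_pos_gt_0[OF assms] by (simp add: cond_mean_pos_eq field_simps)
qed

lemma min_mean_stop_time_bounded:
  assumes "cond_B1 F \<or> cond_B2 F"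
  shows "\<exists>K. \<forall>\<mu>>0. \<forall>c \<le> \<mu> / 4. ennreal (min \<mu> 1) * mean_stop_time c (F \<mu>) \<le> ennreal K"
proof -
  from cond_B_mgf_uniform[OF assms]
  obtain \<kappa> where "\<kappa> > 0" and \<kappa>: "\<And>\<mu>. 0 < \<mu> \<Longrightarrow>
      \<exists>\<theta>\<ge>0. \<kappa> * min \<mu> 1 \<le> \<theta> * \<mu> \<and> mgf (F \<mu>) (- \<theta>) \<le> ennreal (exp (- (\<theta> * \<mu> / 2)))"
    by blast
  have "ennreal (min \<mu> 1) * mean_stop_time c (F \<mu>) \<le> ennreal (1 + 4 / \<kappa>)" if "0 < \<mu>" "c \<le> \<mu> / 4" for \<mu> c
  proof -
    obtain \<theta> where "0 \<le> \<theta>" and \<theta>: "\<kappa> * min \<mu> 1 \<le> \<theta> * \<mu>"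
      and mgf: "mgf (F \<mu>) (- \<theta>) \<le> ennreal (exp (- (\<theta> * \<mu> / 2)))"
      using \<kappa>[OF \<open>0 < \<mu>\<close>] by blast
    have "0 < \<theta> * \<mu>"
      using \<theta> \<open>\<kappa> > 0\<close> \<open>0 < \<mu>\<close> by (smt (verit) mult_pos_pos)
    have "ennreal (min \<mu> 1) * mean_stop_time c (F \<mu>) \<le> ennreal (min \<mu> 1) * ennreal (1 + 4 / (\<theta> * \<mu>))"
      using real_distribution.mean_stop_time_chernoff[OF real_distribution[OF \<open>0 < \<mu>\<close>]
          \<open>0 \<le> \<theta>\<close> \<open>0 < \<theta> * \<mu>\<close> mgf \<open>c \<le> \<mu> / 4\<close>]
      by (rule mult_left_mono) simp
    also have "\<dots> = ennreal (min \<mu> 1 + 4 * min \<mu> 1 / (\<theta> * \<mu>))"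
      using \<open>0 < \<mu>\<close> \<open>0 < \<theta> * \<mu>\<close> by (simp add: ennreal_mult[symmetric] field_simps)
    also have "\<dots> \<le> ennreal (1 + 4 / \<kappa>)"
      using \<theta> \<open>\<kappa> > 0\<close> \<open>0 < \<theta> * \<mu>\<close> by (intro ennreal_leI add_mono) (auto simp: field_simps)
    finally show ?thesis .
  qed
  then show ?thesis by blast
qed

lemma scaled_mean_stop_time_le_B1:
  assumes nat: "AE x in F \<mu>. x \<in> \<nat>" and "0 < \<theta>" "0 < \<mu>"
    and mgf: "mgf (F \<mu>) (- \<theta>) \<le> ennreal (exp (- (\<theta> * \<mu> / 2)))"
    and "0 < \<eta>" "\<eta> \<le> 1 / 4" "c \<le> \<eta> * \<mu>"
  shows "ennreal \<mu> * mean_stop_time c (F \<mu>)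
    \<le> ennreal (cond_mean_pos (F \<mu>) + exp (- (\<theta> / (8 * \<eta>))) * (1 + 8 / \<theta>) * (\<mu> + 1))"
proof -
  define p where "p = measure (F \<mu>) {0<..}"
  define K where "K = exp (- (\<theta> / (8 * \<eta>)))"
  have "0 < p"
    unfolding p_def by (rule prob_reward_pos_gt_0[OF \<open>0 < \<mu>\<close>])
  have "ennreal \<mu> * mean_stop_time c (F \<mu>) \<le> ennreal \<mu> * ennreal (1 / p + K * (1 + 8 / (\<theta> * \<mu>)))"
    using real_distribution.mean_stop_time_lattice[OF real_distribution[OF \<open>0 < \<mu>\<close>]
        nat prob_reward_pos_gt_0[OF \<open>0 < \<mu>\<close>]] assms(2-)
    by (intro mult_left_mono) (simp_all add: p_def K_def)
  also have "\<dots> = ennreal (\<mu> / p + K * (\<mu> + 8 / \<theta>))"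
    using \<open>0 < \<mu>\<close> \<open>0 < p\<close> \<open>0 < \<theta>\<close> by (simp add: ennreal_mult[symmetric] K_def field_simps)
  also have "\<dots> \<le> ennreal (cond_mean_pos (F \<mu>) + K * (1 + 8 / \<theta>) * (\<mu> + 1))"
    using \<open>0 < \<mu>\<close> \<open>0 < \<theta>\<close> cond_mean_pos_eq[OF \<open>0 < \<mu>\<close>]
    by (intro ennreal_leI) (simp add: p_def K_def field_simps)
  finally show ?thesis
    unfolding K_def .
qed

lemma mean_stop_time_small_threshold_B1:
  assumes "cond_B1 F" "0 < \<epsilon>"
  shows "\<exists>\<eta>>0. \<forall>\<mu>>0. \<forall>c \<le> \<eta> * \<mu>.
    ennreal \<mu> * mean_stop_time c (F \<mu>) \<le> ennreal (cond_mean_pos (F \<mu>) + \<epsilon> * (\<mu> + 1))"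
proof -
  obtain \<theta> where "\<theta> > 0" and mgf: "\<forall>\<mu>>0. mgf (F \<mu>) (- \<theta>) \<le> ennreal (exp (- (\<theta> * \<mu> / 2)))"
    using cond_B1_mgf[OF assms(1)] by blast
  have nat: "\<forall>\<mu>>0. AE x in F \<mu>. x \<in> \<nat>"
    using assms(1) unfolding cond_B1_def by blast
  define L where "L = 1 + 8 / \<theta>"
  define \<eta> where "\<eta> = min (1 / 4) (\<theta> * \<epsilon> / (8 * L))"
  have "0 < L"
    using \<open>\<theta> > 0\<close> unfolding L_def by (simp add: add_pos_pos)
  then have "0 < \<eta>" "\<eta> \<le> 1 / 4" "\<eta> \<le> \<theta> * \<epsilon> / (8 * L)"
    using \<open>\<theta> > 0\<close> \<open>0 < \<epsilon>\<close> unfolding \<eta>_def by auto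
  have "exp (- (\<theta> / (8 * \<eta>))) \<le> 8 * \<eta> / \<theta>"
    using exp_ge_add_one_self[of "\<theta> / (8 * \<eta>)"] \<open>\<theta> > 0\<close> \<open>0 < \<eta>\<close> by (simp add: exp_minus field_simps)
  also have "\<dots> \<le> \<epsilon> / L"
    using \<open>\<eta> \<le> \<theta> * \<epsilon> / (8 * L)\<close> \<open>\<theta> > 0\<close> \<open>0 < L\<close> by (simp add: field_simps)
  finally have KL: "exp (- (\<theta> / (8 * \<eta>))) * L \<le> \<epsilon>"
    using \<open>0 < L\<close> by (simp add: field_simps)
  have "ennreal \<mu> * mean_stop_time c (F \<mu>) \<le> ennreal (cond_mean_pos (F \<mu>) + \<epsilon> * (\<mu> + 1))"
    if "0 < \<mu>" "c \<le> \<eta> * \<mu>" for \<mu> c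
  proof -
    have "ennreal \<mu> * mean_stop_time c (F \<mu>)
        \<le> ennreal (cond_mean_pos (F \<mu>) + exp (- (\<theta> / (8 * \<eta>))) * L * (\<mu> + 1))"
      using nat mgf that \<open>\<theta> > 0\<close> \<open>0 < \<eta>\<close> \<open>\<eta> \<le> 1 / 4\<close> unfolding L_def
      by (intro scaled_mean_stop_time_le_B1) auto
    also have "\<dots> \<le> ennreal (cond_mean_pos (F \<mu>) + \<epsilon> * (\<mu> + 1))"
      using KL that(1) by (intro ennreal_leI add_left_mono mult_right_mono) auto
    finally show ?thesis .
  qed
  with \<open>0 < \<eta>\<close> show ?thesis by blast
qed

lemma cond_B2_small_ball:
  assumes "cond_B2 F" "0 < e"
  shows "\<exists>\<gamma>>0. \<forall>\<mu>>0. \<forall>a. 0 < a \<and> a < \<gamma> \<longrightarrow> measure (F \<mu>) {..a * \<mu>} \<le> e"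
proof -
  have "((\<lambda>\<gamma>. SUP \<mu>\<in>{0<..}. measure (F \<mu>) {..\<gamma> * \<mu>}) \<longlongrightarrow> 0) (at_right 0)"
    using assms(1) unfolding cond_B2_def by blast
  from order_tendstoD(2)[OF this assms(2)]
  obtain \<gamma> where "\<gamma> > 0" and \<gamma>: "\<And>a. 0 < a \<Longrightarrow> a < \<gamma> \<Longrightarrow> (SUP \<mu>\<in>{0<..}. measure (F \<mu>) {..a * \<mu>}) < e"
    unfolding eventually_at_right_field by auto
  have "measure (F \<mu>) {..a * \<mu>} \<le> e" if "0 < \<mu>" "0 < a" "a < \<gamma>" for \<mu> a
  proof -
    have "measure (F \<mu>) {..a * \<mu>} \<le> (SUP \<mu>\<in>{0<..}. measure (F \<mu>) {..a * \<mu>})"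
      using that real_distribution
      by (intro cSUP_upper bdd_aboveI2[where M=1]) (auto simp: real_distribution_def prob_space.prob_le_1)
    with \<gamma>[OF that(2,3)] show ?thesis by simp
  qed
  with \<open>\<gamma> > 0\<close> show ?thesis by blast
qed

lemma mean_stop_time_le_B2:
  assumes mgf: "mgf (F \<mu>) (- (\<tau> / \<mu>)) \<le> ennreal (exp (- (\<tau> / 2)))" and "0 < \<tau>" "0 < \<mu>"
    and "c \<le> \<mu> / 4" and small: "\<And>t. 1 \<le> t \<Longrightarrow> t \<le> N \<Longrightarrow> measure (F \<mu>) {..c * real t} \<le> e" "0 \<le> e"
  shows "mean_stop_time c (F \<mu>) \<le> ennreal (1 + real N * e + exp (- (\<tau> / 8)) ^ (N + 1) / (1 - exp (- (\<tau> / 8))))"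
proof -
  have "mgf (F \<mu>) (- (\<tau> / \<mu>)) \<le> ennreal (exp (- (\<tau> / \<mu> * \<mu> / 2)))"
    using mgf \<open>0 < \<mu>\<close> by simp
  then have "mean_stop_time c (F \<mu>)
      \<le> ennreal (1 + real N * e + exp (- (\<tau> / \<mu> * \<mu> / 8)) ^ (N + 1) / (1 - exp (- (\<tau> / \<mu> * \<mu> / 8))))"
    using assms(2-) by (intro real_distribution.mean_stop_time_small_ball[OF real_distribution nonneg]) auto
  then show ?thesis
    using \<open>0 < \<mu>\<close> by simp
qed

lemma mean_stop_time_small_threshold_B2:
  assumes "cond_B2 F" "0 < \<epsilon>"
  shows "\<exists>\<eta>>0. \<forall>\<mu>>0. \<forall>c \<le> \<eta> * \<mu>. mean_stop_time c (F \<mu>) \<le> ennreal (1 + \<epsilon>)"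
proof -
  obtain \<tau> where "\<tau> > 0" and mgf: "\<forall>\<mu>>0. mgf (F \<mu>) (- (\<tau> / \<mu>)) \<le> ennreal (exp (- (\<tau> / 2)))"
    using cond_B2_mgf[OF assms(1)] by blast
  define r where "r = exp (- (\<tau> / 8))"
  have r: "0 < r" "r < 1"
    using \<open>\<tau> > 0\<close> unfolding r_def by auto
  have "\<forall>\<^sub>F n in sequentially. r ^ n < \<epsilon> / 2 * (1 - r)"
    using r \<open>0 < \<epsilon>\<close> by (intro order_tendstoD(2)[OF LIMSEQ_power_zero]) auto
  then obtain N where "r ^ (N + 1) < \<epsilon> / 2 * (1 - r)"
    unfolding eventually_sequentially by (meson le_add1)
  then have N: "r ^ (N + 1) / (1 - r) \<le> \<epsilon> / 2"
    using r by (simp add: field_simps)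
  define e where "e = \<epsilon> / (2 * (real N + 1))"
  have "0 < e" "real N * e \<le> \<epsilon> / 2"
    using \<open>0 < \<epsilon>\<close> unfolding e_def by (simp_all add: field_simps)
  obtain \<gamma> where "\<gamma> > 0" and \<gamma>: "\<forall>\<mu>>0. \<forall>a. 0 < a \<and> a < \<gamma> \<longrightarrow> measure (F \<mu>) {..a * \<mu>} \<le> e"
    using cond_B2_small_ball[OF assms(1) \<open>0 < e\<close>] by blast
  define \<eta> where "\<eta> = min (1 / 4) (\<gamma> / (real N + 1))"
  have "0 < \<eta>"
    using \<open>\<gamma> > 0\<close> unfolding \<eta>_def by auto
  have "\<eta> \<le> 1 / 4"
    unfolding \<eta>_def by (rule min.cobounded1)
  have "mean_stop_time c (F \<mu>) \<le> ennreal (1 + \<epsilon>)" if "0 < \<mu>" "c \<le> \<eta> * \<mu>" for \<mu> c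
  proof -
    have small: "measure (F \<mu>) {..c * real t} \<le> e" if "1 \<le> t" "t \<le> N" for t
    proof -
      have "real t * \<eta> \<le> real N * (\<gamma> / (real N + 1))"
        using that \<open>0 < \<eta>\<close> by (intro mult_mono) (auto simp: \<eta>_def)
      also have "\<dots> < \<gamma>"
        using \<open>\<gamma> > 0\<close> by (simp add: field_simps)
      finally have "measure (F \<mu>) {..(real t * \<eta>) * \<mu>} \<le> e"
        using \<gamma> \<open>0 < \<mu>\<close> \<open>0 < \<eta>\<close> that by simp
      moreover have "c * real t \<le> (real t * \<eta>) * \<mu>"
        using mult_right_mono[OF \<open>c \<le> \<eta> * \<mu>\<close>, of "real t"] by (simp add: algebra_simps)
      then have "measure (F \<mu>) {..c * real t} \<le> measure (F \<mu>) {..(real t * \<eta>) * \<mu>}"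
        using real_distribution[OF \<open>0 < \<mu>\<close>]
        by (intro finite_measure.finite_measure_mono) (auto simp: real_distribution_def prob_space_def real_distribution_axioms_def)
      ultimately show ?thesis by simp
    qed
    have "c \<le> \<mu> / 4"
      using mult_right_mono[OF \<open>\<eta> \<le> 1 / 4\<close>, of \<mu>] that by linarith
    then have "mean_stop_time c (F \<mu>) \<le> ennreal (1 + real N * e + r ^ (N + 1) / (1 - r))"
      unfolding r_def using mgf that \<open>\<tau> > 0\<close> \<open>0 < e\<close> by (intro mean_stop_time_le_B2 small) auto
    also have "\<dots> \<le> ennreal (1 + \<epsilon>)"
      using N \<open>real N * e \<le> \<epsilon> / 2\<close> by (intro ennreal_leI) linarith
    finally show ?thesis .
  qed
  with \<open>0 < \<eta>\<close> show ?thesis by blast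
qed

lemma mean_stop_time_small_threshold:
  assumes "cond_B1 F \<or> cond_B2 F" "0 < \<epsilon>"
  shows "\<exists>\<eta>>0. \<forall>\<mu>>0. \<forall>c \<le> \<eta> * \<mu>.
    ennreal \<mu> * mean_stop_time c (F \<mu>) \<le> ennreal (cond_mean_pos (F \<mu>) + \<epsilon> * (\<mu> + 1))"
  using assms(1)
proof
  assume "cond_B1 F"
  then show ?thesis
    using mean_stop_time_small_threshold_B1 assms(2) by blast
next
  assume "cond_B2 F"
  then obtain \<eta> where "\<eta> > 0" and \<eta>: "\<forall>\<mu>>0. \<forall>c \<le> \<eta> * \<mu>. mean_stop_time c (F \<mu>) \<le> ennreal (1 + \<epsilon>)"
    using mean_stop_time_small_threshold_B2 assms(2) by blast
  have "ennreal \<mu> * mean_stop_time c (F \<mu>) \<le> ennreal (cond_mean_pos (F \<mu>) + \<epsilon> * (\<mu> + 1))"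
    if "0 < \<mu>" "c \<le> \<eta> * \<mu>" for \<mu> c
  proof -
    have "ennreal \<mu> * mean_stop_time c (F \<mu>) \<le> ennreal \<mu> * ennreal (1 + \<epsilon>)"
      using \<eta> that by (intro mult_left_mono) auto
    also have "\<dots> = ennreal (\<mu> + \<epsilon> * \<mu>)"
      using that(1) assms(2) by (simp add: ennreal_mult[symmetric] algebra_simps)
    also have "\<dots> \<le> ennreal (cond_mean_pos (F \<mu>) + \<epsilon> * (\<mu> + 1))"
      using le_cond_mean_pos[OF that(1)] assms(2) by (intro ennreal_leI) (simp add: algebra_simps)
    finally show ?thesis .
  qed
  with \<open>\<eta> > 0\<close> show ?thesis by blast
qed

end

lemma nn_integral_add_le:
  assumes f [measurable]: "f \<in> borel_measurable M"
  shows "(\<integral>\<^sup>+ x. f x + h x \<partial>M) \<le> integral\<^sup>N M f + integral\<^sup>N M h"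
  unfolding nn_integral_def_finite[of M "\<lambda>x. f x + h x"]
proof (rule SUP_least, clarify)
  fix s assume s: "simple_function M s" "s \<le> (\<lambda>x. f x + h x)" "\<forall>x. s x < top"
  have [measurable]: "s \<in> borel_measurable M"
    using s(1) by (rule borel_measurable_simple_function)
  have "integral\<^sup>S M s = (\<integral>\<^sup>+ x. s x \<partial>M)"
    using s(1) by (rule nn_integral_eq_simple_integral[symmetric])
  also have "\<dots> \<le> (\<integral>\<^sup>+ x. f x + (s x - f x) \<partial>M)"
    by (intro nn_integral_mono) (metis add.commute diff_add_self_ennreal nle_le)
  also have "\<dots> = integral\<^sup>N M f + (\<integral>\<^sup>+ x. s x - f x \<partial>M)"
    by (rule nn_integral_add) measurable
  also have "\<dots> \<le> integral\<^sup>N M f + integral\<^sup>N M h"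
  proof (intro add_left_mono nn_integral_mono)
    fix x
    have "s x \<le> f x + h x"
      using s(2) by (auto simp: le_fun_def)
    then show "s x - f x \<le> h x"
      using s(3)[rule_format, of x] by (auto simp: ennreal_minus_le_iff add.commute)
  qed
  finally show "integral\<^sup>S M s \<le> integral\<^sup>N M f + integral\<^sup>N M h" .
qed

lemma nn_integral_tail_le:
  fixes f f' :: "real \<Rightarrow> ennreal"
  assumes "0 < d" and "\<And>\<mu>. d \<le> \<mu> \<Longrightarrow> f \<mu> \<le> f' \<mu>"
  shows "(\<integral>\<^sup>+ \<mu>. f \<mu> * indicator {d..} \<mu> \<partial>lborel) \<le> (\<integral>\<^sup>+ \<mu>\<in>{0<..}. f' \<mu> \<partial>lborel)"
  using assms by (intro nn_integral_mono) (auto simp: indicator_def)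

lemma nn_integral_prior_tail_le:
  fixes g h :: "real \<Rightarrow> real"
  assumes g_meas: "g \<in> borel_measurable lborel" and g_nonneg: "\<forall>\<mu>>0. 0 \<le> g \<mu>"
    and g_density: "(\<integral>\<^sup>+ \<mu>\<in>{0<..}. ennreal (g \<mu>) \<partial>lborel) = 1"
    and lam: "(\<integral>\<^sup>+ \<mu>\<in>{0<..}. ennreal (h \<mu> * g \<mu>) \<partial>lborel) = ennreal lam"
    and "0 < d" and h_ge: "\<And>\<mu>. d \<le> \<mu> \<Longrightarrow> \<mu> \<le> h \<mu>"
  shows "(\<integral>\<^sup>+ \<mu>. ennreal (g \<mu> * (\<mu> + 1)) * indicator {d..} \<mu> \<partial>lborel) \<le> ennreal lam + 1"
proof -
  have [measurable]: "g \<in> borel_measurable borel"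
    using g_meas by simp
  have "(\<integral>\<^sup>+ \<mu>. ennreal (g \<mu> * (\<mu> + 1)) * indicator {d..} \<mu> \<partial>lborel)
      = (\<integral>\<^sup>+ \<mu>. ennreal (g \<mu> * \<mu>) * indicator {d..} \<mu> + ennreal (g \<mu>) * indicator {d..} \<mu> \<partial>lborel)"
    using \<open>0 < d\<close> g_nonneg
    by (intro nn_integral_cong) (auto simp: indicator_def distrib_left ennreal_plus)
  also have "\<dots> = (\<integral>\<^sup>+ \<mu>. ennreal (g \<mu> * \<mu>) * indicator {d..} \<mu> \<partial>lborel)
      + (\<integral>\<^sup>+ \<mu>. ennreal (g \<mu>) * indicator {d..} \<mu> \<partial>lborel)"
    by (rule nn_integral_add) (simp_all add: measurable_lborel2)
  also have "\<dots> \<le> ennreal lam + 1"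
  proof (rule add_mono)
    have "g \<mu> * \<mu> \<le> h \<mu> * g \<mu>" if "d \<le> \<mu>" for \<mu>
      using mult_left_mono[OF h_ge[OF that], of "g \<mu>"] g_nonneg that \<open>0 < d\<close> by (simp add: mult.commute)
    then show "(\<integral>\<^sup>+ \<mu>. ennreal (g \<mu> * \<mu>) * indicator {d..} \<mu> \<partial>lborel) \<le> ennreal lam"
      unfolding lam[symmetric] using \<open>0 < d\<close> by (intro nn_integral_tail_le ennreal_leI)
    show "(\<integral>\<^sup>+ \<mu>. ennreal (g \<mu>) * indicator {d..} \<mu> \<partial>lborel) \<le> 1"
      unfolding g_density[symmetric] using \<open>0 < d\<close> by (intro nn_integral_tail_le) auto
  qed
  finally show ?thesis .
qed

lemma nn_integral_prior_le:
  fixes g h :: "real \<Rightarrow> real" and E :: "real \<Rightarrow> ennreal"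
  assumes g_meas: "g \<in> borel_measurable lborel" and g_nonneg: "\<forall>\<mu>>0. 0 \<le> g \<mu>"
    and g_density: "(\<integral>\<^sup>+ \<mu>\<in>{0<..}. ennreal (g \<mu>) \<partial>lborel) = 1"
    and lam: "(\<integral>\<^sup>+ \<mu>\<in>{0<..}. ennreal (h \<mu> * g \<mu>) \<partial>lborel) = ennreal lam" "0 \<le> lam"
    and "0 < d" "0 \<le> \<epsilon>"
    and h_ge: "\<And>\<mu>. d \<le> \<mu> \<Longrightarrow> \<mu> \<le> h \<mu>"
    and E: "\<And>\<mu>. d \<le> \<mu> \<Longrightarrow> ennreal \<mu> * E \<mu> \<le> ennreal (h \<mu> + \<epsilon> * (\<mu> + 1))"
  shows "(\<integral>\<^sup>+ \<mu>. ennreal (g \<mu> * \<mu>) * E \<mu> * indicator {d..} \<mu> \<partial>lborel) \<le> ennreal (lam + \<epsilon> * (lam + 1))"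
proof -
  have [measurable]: "g \<in> borel_measurable borel"
    using g_meas by simp
  define B where "B \<mu> = ennreal \<epsilon> * (ennreal (g \<mu> * (\<mu> + 1)) * indicator {d..} \<mu>)" for \<mu>
  have B_meas: "B \<in> borel_measurable lborel"
    unfolding B_def measurable_lborel2 by measurable
  have pointwise: "ennreal (g \<mu> * \<mu>) * E \<mu> * indicator {d..} \<mu> \<le> B \<mu> + ennreal (h \<mu> * g \<mu>) * indicator {0<..} \<mu>"
    for \<mu>
  proof (cases "d \<le> \<mu>")
    case True
    then have "0 < \<mu>" "0 \<le> g \<mu>"
      using \<open>0 < d\<close> g_nonneg by auto
    have "ennreal (g \<mu> * \<mu>) * E \<mu> = ennreal (g \<mu>) * (ennreal \<mu> * E \<mu>)"
      using \<open>0 < \<mu>\<close> \<open>0 \<le> g \<mu>\<close> by (simp add: ennreal_mult mult.assoc)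
    also have "\<dots> \<le> ennreal (g \<mu>) * ennreal (h \<mu> + \<epsilon> * (\<mu> + 1))"
      by (intro mult_left_mono E[OF True]) simp
    also have "\<dots> = B \<mu> + ennreal (h \<mu> * g \<mu>) * indicator {0<..} \<mu>"
      using True \<open>0 < \<mu>\<close> \<open>0 \<le> g \<mu>\<close> \<open>0 \<le> \<epsilon>\<close> h_ge[OF True]
      by (simp add: B_def ennreal_mult[symmetric] ennreal_plus[symmetric] algebra_simps del: ennreal_plus)
    finally show ?thesis
      using True by simp
  qed (simp add: B_def)
  have "(\<integral>\<^sup>+ \<mu>. ennreal (g \<mu> * \<mu>) * E \<mu> * indicator {d..} \<mu> \<partial>lborel)
      \<le> (\<integral>\<^sup>+ \<mu>. B \<mu> + ennreal (h \<mu> * g \<mu>) * indicator {0<..} \<mu> \<partial>lborel)"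
    by (intro nn_integral_mono pointwise)
  also have "\<dots> \<le> integral\<^sup>N lborel B + ennreal lam"
    unfolding lam(1)[symmetric] by (rule nn_integral_add_le[OF B_meas])
  also have "integral\<^sup>N lborel B \<le> ennreal \<epsilon> * (ennreal lam + 1)"
    unfolding B_def
    using nn_integral_prior_tail_le[OF g_meas g_nonneg g_density lam(1) \<open>0 < d\<close> h_ge]
    by (subst nn_integral_cmult) (simp_all add: measurable_lborel2 mult_left_mono)
  also have "ennreal \<epsilon> * (ennreal lam + 1) + ennreal lam = ennreal (lam + \<epsilon> * (lam + 1))"
    using lam(2) \<open>0 \<le> \<epsilon>\<close> by (simp add: ennreal_mult ennreal_plus add.commute)
  finally show ?thesis
    by (simp add: add_right_mono)
qed

context reward_family
begin

lemma eventually_min_mean_stop_time_bounded: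
  assumes "cond_B1 F \<or> cond_B2 F"
    and threshold: "\<And>\<eta>. 0 < \<eta> \<Longrightarrow> \<forall>\<^sub>F n in sequentially. 0 < d n \<and> c n \<le> \<eta> * d n"
  shows "\<exists>K. \<forall>\<^sub>F n in sequentially. \<forall>\<mu>. d n \<le> \<mu> \<longrightarrow>
    ennreal (min \<mu> 1) * mean_stop_time (c n) (F \<mu>) \<le> ennreal K"
proof -
  obtain K where K: "\<forall>\<mu>>0. \<forall>c \<le> \<mu> / 4. ennreal (min \<mu> 1) * mean_stop_time c (F \<mu>) \<le> ennreal K"
    using min_mean_stop_time_bounded[OF assms(1)] by blast
  have "\<forall>\<^sub>F n in sequentially. 0 < d n \<and> c n \<le> 1 / 4 * d n"
    by (rule threshold) simp
  then have "\<forall>\<^sub>F n in sequentially. \<forall>\<mu>. d n \<le> \<mu> \<longrightarrow>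
      ennreal (min \<mu> 1) * mean_stop_time (c n) (F \<mu>) \<le> ennreal K"
    by eventually_elim (auto intro!: K[rule_format])
  then show ?thesis by blast
qed

lemma eventually_prior_mean_stop_time_le:
  fixes g :: "real \<Rightarrow> real"
  assumes "g \<in> borel_measurable lborel" "\<forall>\<mu>>0. 0 \<le> g \<mu>"
    and "(\<integral>\<^sup>+ \<mu>\<in>{0<..}. ennreal (g \<mu>) \<partial>lborel) = 1"
    and lam: "(\<integral>\<^sup>+ \<mu>\<in>{0<..}. ennreal (cond_mean_pos (F \<mu>) * g \<mu>) \<partial>lborel) = ennreal lam" "0 \<le> lam"
    and "cond_B1 F \<or> cond_B2 F"
    and threshold: "\<And>\<eta>. 0 < \<eta> \<Longrightarrow> \<forall>\<^sub>F n in sequentially. 0 < d n \<and> c n \<le> \<eta> * d n"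
    and "0 < \<epsilon>"
  shows "\<forall>\<^sub>F n in sequentially.
    (\<integral>\<^sup>+ \<mu>. ennreal (g \<mu> * \<mu>) * mean_stop_time (c n) (F \<mu>) * indicator {d n..} \<mu> \<partial>lborel)
      \<le> ennreal (lam + \<epsilon>)"
proof -
  obtain \<eta> where "0 < \<eta>" and \<eta>: "\<forall>\<mu>>0. \<forall>c \<le> \<eta> * \<mu>.
      ennreal \<mu> * mean_stop_time c (F \<mu>) \<le> ennreal (cond_mean_pos (F \<mu>) + \<epsilon> / (lam + 1) * (\<mu> + 1))"
    using mean_stop_time_small_threshold[OF assms(6), of "\<epsilon> / (lam + 1)"] \<open>0 < \<epsilon>\<close> lam(2) by auto
  show ?thesis
    using threshold[OF \<open>0 < \<eta>\<close>]
  proof eventually_elim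
    case (elim n)
    have "c n \<le> \<eta> * \<mu>" if "d n \<le> \<mu>" for \<mu>
      using elim mult_left_mono[OF that, of \<eta>] \<open>0 < \<eta>\<close> by linarith
    then have "(\<integral>\<^sup>+ \<mu>. ennreal (g \<mu> * \<mu>) * mean_stop_time (c n) (F \<mu>) * indicator {d n..} \<mu> \<partial>lborel)
        \<le> ennreal (lam + \<epsilon> / (lam + 1) * (lam + 1))"
      using elim \<eta> \<open>0 < \<epsilon>\<close> lam(2) le_cond_mean_pos
      by (intro nn_integral_prior_le[OF assms(1-3) lam]) auto
    then show ?case
      using lam(2) by simp
  qed
qed

end

lemma eventually_mult_le_powr:
  fixes b \<zeta> :: "nat \<Rightarrow> real"
  assumes b: "\<forall>\<delta>>0. b \<in> o(\<lambda>n. real n powr \<delta>)" and \<zeta>: "\<zeta> \<in> O(\<lambda>n. real n powr (- \<kappa>))"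
    and "\<omega> < \<kappa>" "0 < \<eta>"
  shows "\<forall>\<^sub>F n in sequentially. b n * \<zeta> n \<le> \<eta> * real n powr (- \<omega>)"
proof -
  define \<delta> where "\<delta> = (\<kappa> - \<omega>) / 2"
  have "0 < \<delta>" "\<delta> - \<kappa> \<le> - \<omega>"
    using \<open>\<omega> < \<kappa>\<close> unfolding \<delta>_def by (simp_all add: field_simps)
  have "(\<lambda>n. b n * \<zeta> n) \<in> o(\<lambda>n. real n powr \<delta> * real n powr (- \<kappa>))"
    using b \<open>0 < \<delta>\<close> \<zeta> by (intro landau_o.small_big_mult) auto
  also have "(\<lambda>n. real n powr \<delta> * real n powr (- \<kappa>)) \<in> O(\<lambda>n. real n powr (- \<omega>))"
  proof (intro bigoI[where c=1] eventually_mono[OF eventually_ge_at_top[of 1]])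
    fix n :: nat assume "1 \<le> n"
    then show "norm (real n powr \<delta> * real n powr (- \<kappa>)) \<le> 1 * norm (real n powr (- \<omega>))"
      using \<open>\<delta> - \<kappa> \<le> - \<omega>\<close> by (simp add: powr_add[symmetric] powr_mono)
  qed
  finally have "(\<lambda>n. b n * \<zeta> n) \<in> o(\<lambda>n. real n powr (- \<omega>))" .
  from landau_o.smallD[OF this \<open>0 < \<eta>\<close>] show ?thesis
    by eventually_elim simp
qed

theorem lemma5:
  fixes g :: "real \<Rightarrow> real" and F :: "real \<Rightarrow> real measure"
    and lam \<alpha> \<beta> \<omega> :: real and b \<zeta> :: "nat \<Rightarrow> real"
  assumes g_meas: "g \<in> borel_measurable lborel"
    and g_nonneg: "\<forall>\<mu>>0. 0 \<le> g \<mu>"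
    and g_density: "(\<integral>\<^sup>+ \<mu>\<in>{0<..}. ennreal (g \<mu>) \<partial>lborel) = 1"
    and F_prob: "\<forall>\<mu>>0. prob_space (F \<mu>)"
    and F_sets: "\<forall>\<mu>>0. sets (F \<mu>) = sets borel"
    and F_nonneg: "\<forall>\<mu>>0. AE x in F \<mu>. 0 \<le> x"
    and F_mean: "\<forall>\<mu>>0. integrable (F \<mu>) (\<lambda>x. x) \<and> (\<integral> x. x \<partial>F \<mu>) = \<mu>"
    and lam_nonneg: "0 \<le> lam"
    and lam_def: "(\<integral>\<^sup>+ \<mu>\<in>{0<..}. ennreal (cond_mean_pos (F \<mu>) * g \<mu>) \<partial>lborel) = ennreal lam"
    and A1: "\<alpha> > 0" "\<beta> > 0" "g \<sim>[at_right 0] (\<lambda>\<mu>. \<alpha> * \<mu> powr (\<beta> - 1))"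
    and A2: "\<exists>a1>0. \<forall>\<mu>>0. a1 * min \<mu> 1 \<le> measure (F \<mu>) {0<..}"
    and B: "cond_B1 F \<or> cond_B2 F"
    and b_inf: "filterlim b at_top sequentially"
    and b_small: "\<forall>\<delta>>0. b \<in> o(\<lambda>n. real n powr \<delta>)"
    and \<zeta>_asymp: "\<zeta> \<sim>[sequentially]
       (\<lambda>n. ((lam * \<beta> * (\<beta> + 1)) / \<alpha>) powr (1 / (\<beta> + 1)) * real n powr (- 1 / (\<beta> + 1)))"
    and \<omega>: "0 < \<omega>" "\<omega> < 1 / (\<beta> + 1)"
  shows "(\<exists>K::real. \<forall>\<^sub>F n in sequentially. \<forall>\<mu>. real n powr (- \<omega>) \<le> \<mu> \<longrightarrow>
            ennreal (min \<mu> 1) * (\<integral>\<^sup>+ x. stop_time (b n * \<zeta> n) x \<partial>iid_seq (F \<mu>)) \<le> ennreal K)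
      \<and> (\<forall>\<epsilon>>0. \<forall>\<^sub>F n in sequentially.
            (\<integral>\<^sup>+ \<mu>. ennreal (g \<mu> * \<mu>) * (\<integral>\<^sup>+ x. stop_time (b n * \<zeta> n) x \<partial>iid_seq (F \<mu>))
                     * indicator {real n powr (- \<omega>)..} \<mu> \<partial>lborel) \<le> ennreal (lam + \<epsilon>))"
proof -
  interpret reward_family F
    using F_prob F_sets F_nonneg F_mean
    by (intro reward_family.intro) (auto simp: real_distribution_def real_distribution_axioms_def)
  have \<zeta>_bigo: "\<zeta> \<in> O(\<lambda>n. real n powr (- (1 / (\<beta> + 1))))"
    using landau_o.big_trans[OF asymp_equiv_imp_bigo[OF \<zeta>_asymp]] by (simp add: landau_o.big.cmult)
  have threshold: "\<forall>\<^sub>F n in sequentially. 0 < real n powr (- \<omega>) \<and> b n * \<zeta> n \<le> \<eta> * real n powr (- \<omega>)"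
    if "0 < \<eta>" for \<eta>
    using eventually_mult_le_powr[OF b_small \<zeta>_bigo \<omega>(2) that] eventually_gt_at_top[of 0]
    by eventually_elim simp
  show ?thesis
    unfolding mean_stop_time_def[symmetric]
    using eventually_min_mean_stop_time_bounded[OF B threshold]
      eventually_prior_mean_stop_time_le[OF g_meas g_nonneg g_density lam_def lam_nonneg B threshold]
    by blast
qed

end
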